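(* Let $R$ be a semi-local ring with maximal ideals $M_1,\dots,M_t$, and $n$ a positive integer. If for all nonnegative integers $\alpha_1,\dots,\alpha_t$ with $\alpha_1+\cdots+\alpha_t=n+1$ we have $M_1^{\alpha_1}\cdots M_t^{\alpha_t}=\{0\}$, then every proper ideal of $R$ is weakly $n$-absorbing.
   Context: All rings are commutative with $1\neq0$; a semi-local ring has finitely many maximal ideals. A proper ideal $I$ of $R$ is weakly $n$-absorbing if whenever $0\neq a_1\cdots a_{n+1}\in I$ with $a_1,\dots,a_{n+1}\in R$, there are $n$ of the $a_i$'s whose product is in $I$. *)

theory Defs
  imports "HOL-Algebra.Algebra"
begin

definition weakly_n_absorbing :: "('a, 'b) ring_scheme \<Rightarrow> nat \<Rightarrow> 'a set \<Rightarrow> bool" where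
  "weakly_n_absorbing R n I \<longleftrightarrow>
     ideal I R \<and> I \<noteq> carrier R \<and>
     (\<forall>a :: nat \<Rightarrow> 'a. (\<forall>i\<le>n. a i \<in> carrier R) \<longrightarrow>
        finprod R a {..n} \<noteq> \<zero>\<^bsub>R\<^esub> \<longrightarrow> finprod R a {..n} \<in> I \<longrightarrow>
        (\<exists>j\<le>n. finprod R a ({..n} - {j}) \<in> I))"

end

theory Submission
  imports Defs
begin

text \<open>If some factor a_j is a unit, multiplying by its inverse removes it, so the product of the
  other n factors already lies in I. Otherwise every factor is a non-unit and hence lies in one
  of the maximal ideals M_1, ..., M_t; grouping the n+1 factors by the maximal ideal chosen for
  them puts the product into M_1^\<alpha>_1 ... M_t^\<alpha>_t with \<alpha>_1 + ... + \<alpha>_t = n+1,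
  which is zero by hypothesis, so the weak absorption condition holds vacuously.\<close>

lemma (in cring) ex_maximalideal_superset:
  assumes I: "ideal I R" "I \<noteq> carrier R"
  shows "\<exists>M. maximalideal M R \<and> I \<subseteq> M"
proof -
  define S where "S = {J. ideal J R \<and> I \<subseteq> J \<and> \<one> \<notin> J}"
  have "I \<in> S"
    using I ideal.one_imp_carrier unfolding S_def by blast
  then have "\<exists>M\<in>S. \<forall>J\<in>S. M \<subseteq> J \<longrightarrow> J = M"
  proof (intro subset_Zorn_nonempty)
    fix C assume C: "C \<noteq> {}" "subset.chain S C"
    then have "subset.chain {J. ideal J R} C"
      unfolding pred_on.chain_def S_def by auto
    with C(1) have "ideal (\<Union>C) R"
      using chain_Union_is_ideal[of C] by simp
    with C show "\<Union>C \<in> S"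
      unfolding pred_on.chain_def S_def by auto
  qed blast
  then obtain M where M: "M \<in> S" and M_max: "\<And>J. J \<in> S \<Longrightarrow> M \<subseteq> J \<Longrightarrow> J = M"
    by blast
  have "maximalideal M R"
  proof (rule maximalidealI)
    show "ideal M R" "carrier R \<noteq> M"
      using M unfolding S_def by auto
    fix J assume J: "ideal J R" "M \<subseteq> J" "J \<subseteq> carrier R"
    show "J = M \<or> J = carrier R"
    proof (cases "\<one> \<in> J")
      case True
      then show ?thesis using ideal.one_imp_carrier[OF J(1)] by blast
    next
      case False
      with J M have "J \<in> S" unfolding S_def by auto
      with J M_max show ?thesis by blast
    qed
  qed
  with M show ?thesis unfolding S_def by blast
qed

lemma (in cring) nonunit_in_maximalideal:
  assumes a: "a \<in> carrier R" "a \<notin> Units R"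
  shows "\<exists>M. maximalideal M R \<and> a \<in> M"
proof -
  have "\<one> \<notin> PIdl a"
  proof
    assume "\<one> \<in> PIdl a"
    then obtain x where "x \<in> carrier R" "\<one> = x \<otimes> a"
      unfolding cgenideal_def by blast
    with a show False
      unfolding Units_def by (auto simp: m_comm)
  qed
  then have "PIdl a \<noteq> carrier R" by blast
  then obtain M where "maximalideal M R" "PIdl a \<subseteq> M"
    using ex_maximalideal_superset cgenideal_ideal a(1) by blast
  then show ?thesis
    using cgenideal_self a(1) by blast
qed

lemma (in comm_monoid) finprod_comp_eq_finprod_pow_card_fibers:
  assumes "finite S" "finite T" "k ` S \<subseteq> T" "f \<in> T \<rightarrow> carrier G"
  shows "finprod G (f \<circ> k) S = (\<Otimes>m\<in>T. f m [^] card {i\<in>S. k i = m})"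
proof -
  have S: "S = (\<Union>m\<in>T. {i\<in>S. k i = m})"
    using assms(3) by blast
  have "finprod G (f \<circ> k) S = (\<Otimes>m\<in>T. finprod G (f \<circ> k) {i\<in>S. k i = m})"
    using assms by (subst S, intro finprod_UN_disjoint) (auto simp: pairwise_def disjnt_def)
  also have "\<dots> = (\<Otimes>m\<in>T. f m [^] card {i\<in>S. k i = m})"
    using assms(4) by (intro finprod_cong' trans[OF finprod_cong' finprod_const]) auto
  finally show ?thesis .
qed

lemma (in cring) finprod_mem_ideal_finprod:
  assumes "finite S" "\<forall>i\<in>S. ideal (J i) R \<and> a i \<in> J i"
  shows "finprod R a S \<in> (\<Otimes>\<^bsub>ideals_set R\<^esub> i\<in>S. J i)"
proof -
  interpret ideals: comm_monoid "ideals_set R"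
    by (rule ideals_set_is_comm_monoid)
  show ?thesis
    using assms
  proof (induction S rule: finite_induct)
    case empty
    show ?case by (subst ideals.finprod_empty) (simp add: ideals_set_def)
  next
    case (insert s S)
    have a: "a \<in> insert s S \<rightarrow> carrier R"
      using insert.prems by (auto intro: ideal.Icarr)
    have J: "J \<in> insert s S \<rightarrow> carrier (ideals_set R)"
      using insert.prems by (auto simp: ideals_set_def)
    have "finprod R a (insert s S) = a s \<otimes> finprod R a S"
      using insert.hyps a by simp
    also have "\<dots> \<in> J s \<cdot> (\<Otimes>\<^bsub>ideals_set R\<^esub> i\<in>S. J i)"
      using insert by (intro ideal_prod.prod) auto
    also have "\<dots> = (\<Otimes>\<^bsub>ideals_set R\<^esub> i\<in>insert s S. J i)"
      using insert.hyps J by (subst ideals.finprod_insert) (auto simp: ideals_set_def)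
    finally show ?case .
  qed
qed

lemma (in cring) finprod_nonunits_eq_zero:
  assumes max: "{I. maximalideal I R} = M ` T" and "finite T" "finite S"
    and zero: "\<forall>\<alpha>. (\<Sum>m\<in>T. \<alpha> m) = card S \<longrightarrow>
                 (\<Otimes>\<^bsub>ideals_set R\<^esub> m\<in>T. M m [^]\<^bsub>ideals_set R\<^esub> \<alpha> m) = {\<zero>}"
    and a: "\<forall>i\<in>S. a i \<in> carrier R - Units R"
  shows "finprod R a S = \<zero>"
proof -
  interpret ideals: comm_monoid "ideals_set R"
    by (rule ideals_set_is_comm_monoid)
  have "\<forall>i\<in>S. \<exists>m. m \<in> T \<and> a i \<in> M m"
    using a max nonunit_in_maximalideal by (metis (no_types, lifting) Diff_iff imageE mem_Collect_eq)
  then obtain k where k: "\<forall>i\<in>S. k i \<in> T \<and> a i \<in> M (k i)"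
    by metis
  have M_ideal: "\<forall>m\<in>T. ideal (M m) R"
    using max maximalideal.axioms(1) by blast
  define \<alpha> where "\<alpha> m = card {i\<in>S. k i = m}" for m
  have "(\<Sum>m\<in>T. \<alpha> m) = card S"
    using sum.group[of S T k "\<lambda>_. 1 :: nat"] k \<open>finite S\<close> \<open>finite T\<close>
    unfolding \<alpha>_def by auto
  have "finprod R a S \<in> (\<Otimes>\<^bsub>ideals_set R\<^esub> i\<in>S. M (k i))"
    using k M_ideal \<open>finite S\<close> by (intro finprod_mem_ideal_finprod) auto
  also have "\<dots> = (\<Otimes>\<^bsub>ideals_set R\<^esub> m\<in>T. M m [^]\<^bsub>ideals_set R\<^esub> \<alpha> m)"
    using ideals.finprod_comp_eq_finprod_pow_card_fibers[of S T k M] k M_ideal \<open>finite S\<close> \<open>finite T\<close>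
    unfolding \<alpha>_def by (auto simp: comp_def ideals_set_def)
  also have "\<dots> = {\<zero>}"
    using zero \<open>(\<Sum>m\<in>T. \<alpha> m) = card S\<close> by blast
  finally show ?thesis by simp
qed

lemma (in cring) finprod_delete_unit_mem_ideal:
  assumes "ideal I R" "finite S" "a \<in> S \<rightarrow> carrier R" "j \<in> S" "a j \<in> Units R"
    and "finprod R a S \<in> I"
  shows "finprod R a (S - {j}) \<in> I"
proof -
  have rest: "finprod R a (S - {j}) \<in> carrier R"
    using assms(3) by (auto intro: finprod_closed)
  have "finprod R a S = a j \<otimes> finprod R a (S - {j})"
    using assms(2-4) finprod_insert[of "S - {j}" j a] by (auto simp: insert_absorb Pi_def)
  then have "finprod R a (S - {j}) = inv (a j) \<otimes> finprod R a S"
    using rest assms(5) by (simp add: m_assoc[symmetric] Units_closed)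
  with assms(1,5,6) show ?thesis
    by (simp add: ideal.I_l_closed)
qed

theorem mainTheorem19:
  fixes R :: "('a, 'b) ring_scheme" and M :: "nat \<Rightarrow> 'a set" and t n :: nat
  assumes "cring R" and "\<one>\<^bsub>R\<^esub> \<noteq> \<zero>\<^bsub>R\<^esub>"
    and "{I. maximalideal I R} = M ` {..<t}" and "inj_on M {..<t}"
    and "n > 0"
    and "\<forall>\<alpha> :: nat \<Rightarrow> nat. (\<Sum>i<t. \<alpha> i) = n + 1 \<longrightarrow>
           (\<Otimes>\<^bsub>ideals_set R\<^esub> i\<in>{..<t}. M i [^]\<^bsub>ideals_set R\<^esub> \<alpha> i) = {\<zero>\<^bsub>R\<^esub>}"
  shows "\<forall>I. ideal I R \<and> I \<noteq> carrier R \<longrightarrow> weakly_n_absorbing R n I"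
proof (intro allI impI)
  interpret cring R by fact
  fix I assume I: "ideal I R \<and> I \<noteq> carrier R"
  show "weakly_n_absorbing R n I"
    unfolding weakly_n_absorbing_def
  proof (intro conjI allI impI)
    fix a :: "nat \<Rightarrow> 'a"
    assume a: "\<forall>i\<le>n. a i \<in> carrier R" and nonzero: "finprod R a {..n} \<noteq> \<zero>\<^bsub>R\<^esub>"
      and in_I: "finprod R a {..n} \<in> I"
    have "\<not> (\<forall>i\<in>{..n}. a i \<in> carrier R - Units R)"
    proof
      assume "\<forall>i\<in>{..n}. a i \<in> carrier R - Units R"
      then have "finprod R a {..n} = \<zero>\<^bsub>R\<^esub>"
        using assms(6) by (intro finprod_nonunits_eq_zero[OF assms(3)]) auto
      with nonzero show False ..
    qed
    then obtain j where "j \<le> n" "a j \<in> Units R"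
      using a by auto
    then show "\<exists>j\<le>n. finprod R a ({..n} - {j}) \<in> I"
      using finprod_delete_unit_mem_ideal[of I "{..n}" a j] I a in_I by auto
  qed (use I in auto)
qed

end
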